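(* Let $\mu$ be a probability measure on $\mathbb{R}$ having an atom, i.e. $\mu(\{x\})>0$ for some $x\in\mathbb{R}$. Let $k\ge1$ and let $X_1,X_2,\dots$ be i.i.d. $k\times k$ random matrices whose entries are i.i.d. with law $\mu$, and $A_n=X_1X_2\cdots X_n$. Then $\lim_{n\to\infty}\Pr(A_n\text{ has all eigenvalues real})=1$. *)

theory Defs
  imports "HOL-Probability.Probability" "Jordan_Normal_Form.Char_Poly"
begin

definition entry_matrix :: "nat \<Rightarrow> (nat \<Rightarrow> nat \<Rightarrow> nat \<Rightarrow> 'w \<Rightarrow> real) \<Rightarrow> nat \<Rightarrow> 'w \<Rightarrow> real mat" where
  "entry_matrix k E m \<omega> = mat k k (\<lambda>(i, j). E m i j \<omega>)"

fun prod_matrix :: "nat \<Rightarrow> (nat \<Rightarrow> real mat) \<Rightarrow> nat \<Rightarrow> real mat" where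
  "prod_matrix k X 0 = 1\<^sub>m k"
| "prod_matrix k X (Suc n) = prod_matrix k X n * X (Suc n)"

definition all_eigenvalues_real :: "real mat \<Rightarrow> bool" where
  "all_eigenvalues_real A \<longleftrightarrow>
     (\<forall>z. eigenvalue (map_mat complex_of_real A) z \<longrightarrow> z \<in> \<real>)"

end

theory Submission
  imports Defs
begin

text \<open>
  If one factor X_m (1 <= m <= n) has all its entries equal to an atom x of mu, then
  A_n = P (x J) Q with J the all-ones matrix, so A_n has rank at most one and its only possible
  nonzero eigenvalue is a real number.  By independence, every X_m is of this form with
  probability p = mu{x}^(k*k) > 0, independently of the other factors, so A_n has only real
  eigenvalues with probability at least 1 - (1 - p)^n.
\<close>

unbundle no vec_syntax \<comment> \<open>frees \<open>$\<close> for indexing of Jordan_Normal_Form vectors\<close>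

lemma mult_const_mat_mult_vec:
  fixes P Q :: "'a::field mat"
  assumes P: "P \<in> carrier_mat k k" and Q: "Q \<in> carrier_mat k k" and u: "u \<in> carrier_vec k"
  shows "(P * mat k k (\<lambda>_. c) * Q) *\<^sub>v u =
    (c * (\<Sum>j<k. (Q *\<^sub>v u) $ j)) \<cdot>\<^sub>v (P *\<^sub>v vec k (\<lambda>_. 1))"
proof -
  have J: "mat k k (\<lambda>_. c) \<in> carrier_mat k k" by simp
  have "mat k k (\<lambda>_. c) *\<^sub>v v = (c * (\<Sum>j<k. v $ j)) \<cdot>\<^sub>v vec k (\<lambda>_. 1)"
    if "v \<in> carrier_vec k" for v
    using that by (intro eq_vecI) (auto simp: mult_mat_vec_def scalar_prod_def sum_distrib_left atLeast0LessThan)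
  then show ?thesis
    using P Q u J by (simp add: assoc_mult_mat_vec[of _ k k _ k] mult_mat_vec[of P k k])
qed

lemma rank_one_eigenvalue:
  fixes A :: "'a::field mat"
  assumes A: "A \<in> carrier_mat k k" and r: "r \<in> carrier_vec k"
    and rank_one: "\<And>u. u \<in> carrier_vec k \<Longrightarrow> A *\<^sub>v u = f u \<cdot>\<^sub>v r"
    and ev: "eigenvalue A l" and l: "l \<noteq> 0"
  shows "l = f r"
proof -
  obtain w where w: "w \<in> carrier_vec k" "w \<noteq> 0\<^sub>v k" and Aw: "A *\<^sub>v w = l \<cdot>\<^sub>v w"
    using ev A unfolding eigenvalue_def eigenvector_def by auto
  have lw: "l \<cdot>\<^sub>v w = f w \<cdot>\<^sub>v r" using Aw rank_one[OF w(1)] by simp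
  have w_r: "w = (f w / l) \<cdot>\<^sub>v r"
  proof (rule eq_vecI)
    fix i assume "i < dim_vec ((f w / l) \<cdot>\<^sub>v r)"
    moreover have "l * w $ i = f w * r $ i" if "i < k" for i
      using arg_cong[OF lw, of "\<lambda>v. v $ i"] that w r by simp
    ultimately show "w $ i = ((f w / l) \<cdot>\<^sub>v r) $ i" using r l by (auto simp: field_simps)
  qed (use w r in auto)
  have "f w \<noteq> 0 \<and> r \<noteq> 0\<^sub>v k"
  proof (rule ccontr)
    assume "\<not> (f w \<noteq> 0 \<and> r \<noteq> 0\<^sub>v k)"
    then have "(f w / l) \<cdot>\<^sub>v r = 0\<^sub>v k" using r by (intro eq_vecI) auto
    with w_r w(2) show False by simp
  qed
  then obtain i where i: "i < k" "r $ i \<noteq> 0" using r by (metis eq_vecI carrier_vecD index_zero_vec)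
  have "f w \<cdot>\<^sub>v r = (f w / l) \<cdot>\<^sub>v (f r \<cdot>\<^sub>v r)"
    using Aw lw w_r rank_one[OF r] mult_mat_vec[OF A r] by metis
  from arg_cong[OF this, of "\<lambda>v. v $ i"] have "f w * r $ i = f w / l * (f r * r $ i)"
    using i r by simp
  then show ?thesis using \<open>f w \<noteq> 0 \<and> r \<noteq> 0\<^sub>v k\<close> i l by (auto simp: field_simps)
qed

lemma all_eigenvalues_real_mult_const_mult:
  assumes P: "P \<in> carrier_mat k k" and Q: "Q \<in> carrier_mat k k"
  shows "all_eigenvalues_real (P * mat k k (\<lambda>_. x) * Q)"
  unfolding all_eigenvalues_real_def
proof (intro allI impI)
  fix l
  let ?P = "map_mat complex_of_real P" and ?Q = "map_mat complex_of_real Q"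
  let ?r = "?P *\<^sub>v vec k (\<lambda>_. 1)" and ?f = "\<lambda>u. complex_of_real x * (\<Sum>j<k. (?Q *\<^sub>v u) $ j)"
  have P': "?P \<in> carrier_mat k k" and Q': "?Q \<in> carrier_mat k k" using P Q by auto
  have "map_mat complex_of_real (P * mat k k (\<lambda>_. x) * Q) = ?P * mat k k (\<lambda>_. complex_of_real x) * ?Q"
  proof -
    have "map_mat complex_of_real (mat k k (\<lambda>_. x)) = mat k k (\<lambda>_. complex_of_real x)"
      by (intro eq_matI) auto
    then show ?thesis
      using P Q of_real_hom.mat_hom_mult[of P k k "mat k k (\<lambda>_. x)" k]
        of_real_hom.mat_hom_mult[of "P * mat k k (\<lambda>_. x)" k k Q k] by (metis mat_carrier mult_carrier_mat)
  qed
  moreover assume "eigenvalue (map_mat complex_of_real (P * mat k k (\<lambda>_. x) * Q)) l"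
  ultimately have ev: "eigenvalue (?P * mat k k (\<lambda>_. complex_of_real x) * ?Q) l" by simp
  have "map_vec complex_of_real (vec k (\<lambda>_. 1)) = vec k (\<lambda>_. 1)" by auto
  then have "?r = map_vec complex_of_real (P *\<^sub>v vec k (\<lambda>_. 1))"
    using P of_real_hom.mult_mat_vec_hom[of P k k "vec k (\<lambda>_. 1)"] by (metis vec_carrier)
  then have "?Q *\<^sub>v ?r = map_vec complex_of_real (Q *\<^sub>v (P *\<^sub>v vec k (\<lambda>_. 1)))"
    using P Q by (simp add: of_real_hom.mult_mat_vec_hom[of _ k k])
  then have "?f ?r \<in> \<real>" using Q by simp
  moreover have "l \<noteq> 0 \<Longrightarrow> l = ?f ?r"
    by (rule rank_one_eigenvalue[OF _ _ mult_const_mat_mult_vec[OF P' Q'] ev]) (use P' Q' in auto)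
  ultimately show "l \<in> \<real>" by (cases "l = 0") auto
qed

lemma prod_matrix_carrier: "(\<And>m. X m \<in> carrier_mat k k) \<Longrightarrow> prod_matrix k X n \<in> carrier_mat k k"
  by (induction n) auto

lemma prod_matrix_split:
  assumes X: "\<And>m. X m \<in> carrier_mat k k" and "1 \<le> m" "m \<le> n"
  shows "\<exists>Q \<in> carrier_mat k k. prod_matrix k X n = prod_matrix k X (m - 1) * X m * Q"
    using \<open>m \<le> n\<close>
proof (induction n rule: dec_induct)
  case base
  obtain m' where "m = Suc m'" using \<open>1 \<le> m\<close> by (cases m) auto
  then have "prod_matrix k X m = prod_matrix k X (m - 1) * X m" by simp
  moreover have "prod_matrix k X (m - 1) * X m \<in> carrier_mat k k"
    using mult_carrier_mat[OF prod_matrix_carrier[of X, OF X] X] .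
  ultimately show ?case using right_mult_one_mat one_carrier_mat by metis
next
  case (step n)
  then obtain Q where Q: "Q \<in> carrier_mat k k" "prod_matrix k X n = prod_matrix k X (m - 1) * X m * Q"
    by blast
  have "prod_matrix k X (Suc n) = prod_matrix k X (m - 1) * X m * Q * X (Suc n)"
    using Q(2) by (simp only: prod_matrix.simps)
  also have "\<dots> = prod_matrix k X (m - 1) * X m * (Q * X (Suc n))"
    using assoc_mult_mat[OF mult_carrier_mat[OF prod_matrix_carrier[of X, OF X] X] Q(1) X] .
  finally show ?case using mult_carrier_mat[OF Q(1) X] by blast
qed

lemma all_eigenvalues_real_prod_matrix_const_factor:
  assumes X: "\<And>m. X m \<in> carrier_mat k k" and "1 \<le> m" "m \<le> n"
    and Xm: "X m = mat k k (\<lambda>_. x)"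
  shows "all_eigenvalues_real (prod_matrix k X n)"
proof -
  obtain Q where Q: "Q \<in> carrier_mat k k" and split: "prod_matrix k X n = prod_matrix k X (m - 1) * X m * Q"
    using prod_matrix_split[where X = X, OF X \<open>1 \<le> m\<close> \<open>m \<le> n\<close>] by blast
  show ?thesis
    unfolding split Xm by (rule all_eigenvalues_real_mult_const_mult[OF prod_matrix_carrier[of X, OF X] Q])
qed

lemma borel_measurable_det:
  fixes A :: "'a \<Rightarrow> 'b::{real_normed_field, second_countable_topology} mat"
  assumes A: "\<And>\<omega>. A \<omega> \<in> carrier_mat k k"
    and entries: "\<And>i j. i < k \<Longrightarrow> j < k \<Longrightarrow> (\<lambda>\<omega>. A \<omega> $$ (i, j)) \<in> borel_measurable M"
  shows "(\<lambda>\<omega>. det (A \<omega>)) \<in> borel_measurable M"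
proof -
  have "(\<lambda>\<omega>. \<Sum>p\<in>{p. p permutes {0..<k}}. signof p * (\<Prod>i=0..<k. A \<omega> $$ (i, p i))) \<in> borel_measurable M"
  proof (intro borel_measurable_sum borel_measurable_times borel_measurable_const borel_measurable_prod)
    fix p i assume "p \<in> {p. p permutes {0..<k}}" "i \<in> {0..<k}"
    then show "(\<lambda>\<omega>. A \<omega> $$ (i, p i)) \<in> borel_measurable M"
      using entries permutes_in_image by fastforce
  qed
  then show ?thesis using det_def'[OF A] by simp
qed

text \<open>A zero of g(\<omega>) in U lies in the interior of some K N, where it is approached by points of a
  countable dense set; conversely, arbitrarily small values on the compact K N force a zero there.
  This replaces the quantifier over z by countable ones.\<close>

lemma sets_Collect_ex_zero:
  fixes g :: "'a \<Rightarrow> 'b::second_countable_topology \<Rightarrow> 'c::real_normed_vector"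
    and K :: "nat \<Rightarrow> 'b set"
  assumes compact: "\<And>N. compact (K N)" and K_U: "\<And>N. K N \<subseteq> U"
    and U_K: "U \<subseteq> (\<Union>N. interior (K N))"
    and cont: "\<And>\<omega>. continuous_on UNIV (g \<omega>)"
    and meas: "\<And>z. (\<lambda>\<omega>. g \<omega> z) \<in> borel_measurable M"
  shows "{\<omega> \<in> space M. \<exists>z\<in>U. g \<omega> z = 0} \<in> sets M"
proof -
  obtain D :: "'b set"
    where "countable D" and dense: "\<And>X. open X \<Longrightarrow> X \<noteq> {} \<Longrightarrow> \<exists>d\<in>D. d \<in> X"
    using countable_dense_setE by blast
  have zero_iff: "(\<exists>z\<in>U. g \<omega> z = 0) \<longleftrightarrow>
      (\<exists>N. \<forall>j::nat. \<exists>d\<in>D \<inter> K N. norm (g \<omega> d) < 1 / Suc j)" for \<omega>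
  proof
    assume "\<exists>z\<in>U. g \<omega> z = 0"
    then obtain z N where z: "g \<omega> z = 0" "z \<in> interior (K N)" using U_K by blast
    have "\<exists>d\<in>D \<inter> K N. norm (g \<omega> d) < 1 / Suc j" for j
    proof -
      let ?X = "interior (K N) \<inter> g \<omega> -` ball 0 (1 / Suc j)"
      have "open ?X" using cont by (intro open_Int open_interior open_vimage) auto
      moreover have "z \<in> ?X" using z by simp
      ultimately obtain d where "d \<in> D" "d \<in> ?X" using dense by blast
      then have "d \<in> D \<inter> K N" "norm (g \<omega> d) < 1 / Suc j"
        using interior_subset by auto
      then show ?thesis by blast
    qed
    then show "\<exists>N. \<forall>j::nat. \<exists>d\<in>D \<inter> K N. norm (g \<omega> d) < 1 / Suc j" by blast
  next
    assume "\<exists>N. \<forall>j::nat. \<exists>d\<in>D \<inter> K N. norm (g \<omega> d) < 1 / Suc j"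
    then obtain N where N: "\<And>j::nat. \<exists>d\<in>D \<inter> K N. norm (g \<omega> d) < 1 / Suc j" by blast
    then have "K N \<noteq> {}" by blast
    moreover have "continuous_on (K N) (\<lambda>y. norm (g \<omega> y))"
      using cont by (intro continuous_on_norm) (auto intro: continuous_on_subset)
    ultimately obtain z
      where z: "z \<in> K N" and min: "\<And>y. y \<in> K N \<Longrightarrow> norm (g \<omega> z) \<le> norm (g \<omega> y)"
      using continuous_attains_inf[OF compact] by blast
    have "g \<omega> z = 0"
    proof (rule ccontr)
      assume "g \<omega> z \<noteq> 0"
      then obtain j where "inverse (real (Suc j)) < norm (g \<omega> z)"
        using reals_Archimedean[of "norm (g \<omega> z)"] by auto
      moreover obtain d where "d \<in> K N" "norm (g \<omega> d) < 1 / Suc j" using N by blast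
      ultimately show False using min[of d] by (simp add: inverse_eq_divide)
    qed
    then show "\<exists>z\<in>U. g \<omega> z = 0" using z K_U by blast
  qed
  have small: "{\<omega> \<in> space M. norm (g \<omega> d) < 1 / Suc j} \<in> sets M" for d j
    using meas[of d] by measurable
  have "{\<omega> \<in> space M. \<exists>d\<in>D \<inter> K N. norm (g \<omega> d) < 1 / Suc j} \<in> sets M" for N j
    using \<open>countable D\<close> by (intro sets.sets_Collect_countable_Ex' small countable_Int1)
  then show ?thesis
    unfolding zero_iff by (intro sets.sets_Collect_countable_Ex sets.sets_Collect_countable_All)
qed

definition nonreal_band :: "nat \<Rightarrow> complex set" where
  "nonreal_band N = cball 0 (real N) \<inter> {z. 1 / Suc N \<le> \<bar>Im z\<bar>}"

lemma compact_nonreal_band: "compact (nonreal_band N)"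
  unfolding nonreal_band_def
  by (intro compact_Int_closed compact_cball closed_Collect_le continuous_intros)

lemma nonreal_band_subset: "nonreal_band N \<subseteq> {z. Im z \<noteq> 0}"
  by (auto simp: nonreal_band_def order_less_le_trans[of 0 "1 / Suc N"])

lemma nonreal_subset_UN_interior_nonreal_band: "{z. Im z \<noteq> 0} \<subseteq> (\<Union>N. interior (nonreal_band N))"
proof
  fix z :: complex assume "z \<in> {z. Im z \<noteq> 0}"
  then have Im: "\<bar>Im z\<bar> > 0" by simp
  obtain N :: nat where N: "norm z < N" "1 / \<bar>Im z\<bar> < N"
    using reals_Archimedean2[of "max (norm z) (1 / \<bar>Im z\<bar>)"] by auto
  have "1 < real N * \<bar>Im z\<bar>" using N(2) Im by (simp add: divide_less_eq)
  then have "1 / Suc N < \<bar>Im z\<bar>" using Im by (simp add: divide_less_eq algebra_simps)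
  then have "z \<in> ball 0 N \<inter> {z. 1 / Suc N < \<bar>Im z\<bar>}" using N(1) by simp
  moreover have "ball 0 N \<inter> {z. 1 / Suc N < \<bar>Im z\<bar>} \<subseteq> interior (nonreal_band N)"
    unfolding nonreal_band_def
    by (intro interior_maximal open_Int open_ball open_Collect_less continuous_intros) auto
  ultimately show "z \<in> (\<Union>N. interior (nonreal_band N))" by blast
qed

lemma sets_Collect_nonreal_zero:
  fixes g :: "'a \<Rightarrow> complex \<Rightarrow> 'c::real_normed_vector"
  assumes "\<And>\<omega>. continuous_on UNIV (g \<omega>)" and "\<And>z. (\<lambda>\<omega>. g \<omega> z) \<in> borel_measurable M"
  shows "{\<omega> \<in> space M. \<exists>z\<in>{z. Im z \<noteq> 0}. g \<omega> z = 0} \<in> sets M"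
  using compact_nonreal_band nonreal_band_subset nonreal_subset_UN_interior_nonreal_band assms
  by (rule sets_Collect_ex_zero)

lemma sets_Collect_all_eigenvalues_real:
  assumes A: "\<And>\<omega>. A \<omega> \<in> carrier_mat k k"
    and entries: "\<And>i j. i < k \<Longrightarrow> j < k \<Longrightarrow> (\<lambda>\<omega>. A \<omega> $$ (i, j)) \<in> borel_measurable M"
  shows "{\<omega> \<in> space M. all_eigenvalues_real (A \<omega>)} \<in> sets M"
proof -
  let ?A = "\<lambda>\<omega>. map_mat complex_of_real (A \<omega>)"
  have A': "?A \<omega> \<in> carrier_mat k k" for \<omega> using A by simp
  have "(\<lambda>\<omega>. poly (char_poly (?A \<omega>)) z) \<in> borel_measurable M" for z
  proof -
    have "(\<lambda>\<omega>. (- char_matrix (?A \<omega>) z) $$ (i, j)) \<in> borel_measurable M"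
      if "i < k" "j < k" for i j
    proof -
      have "(\<lambda>\<omega>. (- char_matrix (?A \<omega>) z) $$ (i, j)) =
          (\<lambda>\<omega>. of_bool (i = j) * z - complex_of_real (A \<omega> $$ (i, j)))"
        using that by (intro ext) (auto simp: char_matrix_def carrier_matD[OF A])
      moreover have "(\<lambda>\<omega>. of_bool (i = j) * z - complex_of_real (A \<omega> $$ (i, j))) \<in> borel_measurable M"
        using entries[OF that] by measurable
      ultimately show ?thesis by (simp only:)
    qed
    then have "(\<lambda>\<omega>. det (- char_matrix (?A \<omega>) z)) \<in> borel_measurable M"
      using A' by (intro borel_measurable_det[of _ k]) auto
    then show ?thesis by (simp add: char_poly_matrix[OF A'])
  qed
  then have "{\<omega> \<in> space M. \<exists>z\<in>{z. Im z \<noteq> 0}. poly (char_poly (?A \<omega>)) z = 0} \<in> sets M"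
    by (intro sets_Collect_nonreal_zero) (auto intro: continuous_intros)
  moreover have "{\<omega> \<in> space M. all_eigenvalues_real (A \<omega>)} =
      space M - {\<omega> \<in> space M. \<exists>z\<in>{z. Im z \<noteq> 0}. poly (char_poly (?A \<omega>)) z = 0}"
    unfolding all_eigenvalues_real_def eigenvalue_root_char_poly[OF A'] complex_is_Real_iff by blast
  ultimately show ?thesis by auto
qed

lemma borel_measurable_prod_matrix_entry:
  assumes X: "\<And>m \<omega>. X m \<omega> \<in> carrier_mat k k"
    and entries: "\<And>m i j. 1 \<le> m \<Longrightarrow> i < k \<Longrightarrow> j < k \<Longrightarrow>
      (\<lambda>\<omega>. X m \<omega> $$ (i, j)) \<in> borel_measurable M"
  shows "i < k \<Longrightarrow> j < k \<Longrightarrow>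
    (\<lambda>\<omega>. prod_matrix k (\<lambda>m. X m \<omega>) n $$ (i, j)) \<in> borel_measurable M"
proof (induction n arbitrary: i j)
  case 0
  then show ?case by simp
next
  case (Suc n)
  have "prod_matrix k (\<lambda>m. X m \<omega>) (Suc n) $$ (i, j) =
      (\<Sum>l<k. prod_matrix k (\<lambda>m. X m \<omega>) n $$ (i, l) * X (Suc n) \<omega> $$ (l, j))" for \<omega>
  proof -
    have "prod_matrix k (\<lambda>m. X m \<omega>) n \<in> carrier_mat k k" by (rule prod_matrix_carrier) (rule X)
    then show ?thesis
      using Suc.prems X[of "Suc n" \<omega>] by (auto simp: scalar_prod_def atLeast0LessThan intro!: sum.cong)
  qed
  moreover have "(\<lambda>\<omega>. \<Sum>l<k. prod_matrix k (\<lambda>m. X m \<omega>) n $$ (i, l) * X (Suc n) \<omega> $$ (l, j))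
      \<in> borel_measurable M"
    using Suc entries by (intro borel_measurable_sum borel_measurable_times) auto
  ultimately show ?case by simp
qed

lemma (in prob_space) prob_UN_indep_events:
  assumes indep: "indep_events B I" and J: "finite J" "J \<subseteq> I" and p: "\<And>m. m \<in> J \<Longrightarrow> prob (B m) = p"
  shows "prob (\<Union>m\<in>J. B m) = 1 - (1 - p) ^ card J"
proof (cases "J = {}")
  case False
  have B: "B m \<in> events" if "m \<in> I" for m using indep that by (auto simp: indep_events_def)
  have "indep_sets (\<lambda>m. sigma_sets (space M) {B m}) I"
    using indep unfolding indep_events_def_alt by (rule indep_sets_sigma) (simp add: Int_stable_def)
  then have "prob (\<Inter>m\<in>J. space M - B m) = (\<Prod>m\<in>J. prob (space M - B m))"
    by (rule indep_setsD) (use J False in \<open>auto intro: sigma_sets.Compl sigma_sets.Basic\<close>)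
  also have "\<dots> = (1 - p) ^ card J"
    using J B p by (simp add: prob_compl subsetD)
  also have "(\<Inter>m\<in>J. space M - B m) = space M - (\<Union>m\<in>J. B m)" using False by blast
  finally have "prob (space M - (\<Union>m\<in>J. B m)) = (1 - p) ^ card J" .
  moreover have "(\<Union>m\<in>J. B m) \<in> events" using J B by blast
  ultimately show ?thesis by (simp add: prob_compl)
qed simp

lemma (in prob_space) indep_events_blocks_eq_const:
  fixes X :: "'i \<Rightarrow> 'a \<Rightarrow> real"
  assumes indep: "indep_vars (\<lambda>_. borel) X I"
    and K: "\<And>j. j \<in> L \<Longrightarrow> K j \<subseteq> I" "\<And>j. j \<in> L \<Longrightarrow> finite (K j)"
      "disjoint_family_on K L"
  shows "indep_events (\<lambda>j. {\<omega> \<in> space M. \<forall>i\<in>K j. X i \<omega> = x}) L"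
proof -
  have "indep_events (\<lambda>j. {\<omega> \<in> space M. \<forall>i\<in>K j. restrict (\<lambda>i. X i \<omega>) (K j) i = x}) L"
  proof (rule indep_eventsI_indep_vars[OF indep_vars_restrict[OF indep K(1,3)]])
    fix j assume "j \<in> L"
    then show "{y \<in> space (Pi\<^sub>M (K j) (\<lambda>_. borel)). \<forall>i\<in>K j. y i = x}
        \<in> sets (Pi\<^sub>M (K j) (\<lambda>_. borel))"
      using K(2) by measurable
  qed
  then show ?thesis by simp
qed

lemma (in prob_space) prob_Ball_eq_indep_vars:
  fixes X :: "'i \<Rightarrow> 'a \<Rightarrow> real"
  assumes "indep_vars (\<lambda>_. borel) X I" "K \<subseteq> I" "finite K" "K \<noteq> {}"
  shows "prob {\<omega> \<in> space M. \<forall>i\<in>K. X i \<omega> = x} =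
    (\<Prod>i\<in>K. prob {\<omega> \<in> space M. X i \<omega> = x})"
proof -
  have "prob (\<Inter>i\<in>K. X i -` {x} \<inter> space M) = (\<Prod>i\<in>K. prob (X i -` {x} \<inter> space M))"
    using assms by (intro indep_varsD) auto
  moreover have "(\<Inter>i\<in>K. X i -` {x} \<inter> space M) = {\<omega> \<in> space M. \<forall>i\<in>K. X i \<omega> = x}"
    using \<open>K \<noteq> {}\<close> by blast
  ultimately show ?thesis by (simp add: vimage_def Int_def conj_commute)
qed

lemma entry_matrix_eq_const_iff:
  "entry_matrix k E m \<omega> = mat k k (\<lambda>_. x) \<longleftrightarrow>
    (\<forall>t\<in>{m} \<times> {..<k} \<times> {..<k}. (\<lambda>(m, i, j). E m i j) t \<omega> = x)"
  by (auto simp: entry_matrix_def mat_eq_iff)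

context prob_space
begin

lemma indep_events_entry_matrix_eq_const:
  assumes "indep_vars (\<lambda>_. borel) (\<lambda>(m, i, j). E m i j) ({1..} \<times> {..<k} \<times> {..<k})"
  shows "indep_events (\<lambda>m. {\<omega> \<in> space M. entry_matrix k E m \<omega> = mat k k (\<lambda>_. x)}) {1..}"
  unfolding entry_matrix_eq_const_iff
  by (rule indep_events_blocks_eq_const[OF assms, where K = "\<lambda>m. {m} \<times> {..<k} \<times> {..<k}"])
    (auto simp: disjoint_family_on_def)

lemma prob_entry_matrix_eq_const:
  assumes indep: "indep_vars (\<lambda>_. borel) (\<lambda>(m, i, j). E m i j) ({1..} \<times> {..<k} \<times> {..<k})"
    and distr: "\<And>i j. i < k \<Longrightarrow> j < k \<Longrightarrow> distr M borel (E m i j) = \<mu>"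
    and "k \<ge> 1" "m \<ge> 1"
  shows "prob {\<omega> \<in> space M. entry_matrix k E m \<omega> = mat k k (\<lambda>_. x)} = measure \<mu> {x} ^ (k * k)"
proof -
  let ?K = "{m} \<times> {..<k} \<times> {..<k}" and ?X = "\<lambda>(m, i, j). E m i j"
  have factor: "prob {\<omega> \<in> space M. ?X t \<omega> = x} = measure \<mu> {x}" if t_mem: "t \<in> ?K" for t
  proof -
    obtain i j where t: "t = (m, i, j)" "i < k" "j < k" using t_mem by (cases t) auto
    have "E m i j \<in> borel_measurable M"
      using indep \<open>m \<ge> 1\<close> t unfolding indep_vars_def by auto
    then have "prob (E m i j -` {x} \<inter> space M) = measure \<mu> {x}"
      using distr[OF t(2,3)] measure_distr[of "E m i j" M borel "{x}"] by simp
    moreover have "E m i j -` {x} \<inter> space M = {\<omega> \<in> space M. E m i j \<omega> = x}" by blast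
    ultimately show ?thesis by (simp add: t)
  qed
  have "?K \<subseteq> {1..} \<times> {..<k} \<times> {..<k}" "finite ?K" "?K \<noteq> {}"
    using \<open>k \<ge> 1\<close> \<open>m \<ge> 1\<close> by (auto simp: lessThan_empty_iff)
  then have "prob {\<omega> \<in> space M. \<forall>t\<in>?K. ?X t \<omega> = x} =
      (\<Prod>t\<in>?K. prob {\<omega> \<in> space M. ?X t \<omega> = x})"
    by (rule prob_Ball_eq_indep_vars[OF indep])
  also have "\<dots> = (\<Prod>t\<in>?K. measure \<mu> {x})"
    using factor by (rule prod.cong[OF refl])
  also have "\<dots> = measure \<mu> {x} ^ (k * k)"
    by (simp add: card_cartesian_product)
  finally show ?thesis
    unfolding entry_matrix_eq_const_iff .
qed

end

theorem mainTheorem18: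
  fixes \<mu> :: "real measure" and M :: "'w measure" and k :: nat
    and E :: "nat \<Rightarrow> nat \<Rightarrow> nat \<Rightarrow> 'w \<Rightarrow> real"
  assumes "prob_space \<mu>" and "sets \<mu> = sets borel"
    and "\<exists>x. measure \<mu> {x} > 0"
    and "prob_space M"
    and "k \<ge> 1"
    and "prob_space.indep_vars M (\<lambda>_. borel) (\<lambda>(m, i, j). E m i j) ({1..} \<times> {..<k} \<times> {..<k})"
    and "\<And>m i j. m \<ge> 1 \<Longrightarrow> i < k \<Longrightarrow> j < k \<Longrightarrow> distr M borel (E m i j) = \<mu>"
  shows "(\<lambda>n. measure M {\<omega> \<in> space M.
            all_eigenvalues_real (prod_matrix k (\<lambda>m. entry_matrix k E m \<omega>) n)})
         \<longlonglongrightarrow> 1"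
proof -
  interpret M: prob_space M by fact
  obtain x where "measure \<mu> {x} > 0" using assms(3) by blast
  define p where "p = measure \<mu> {x} ^ (k * k)"
  have "0 < p" "p \<le> 1"
    using \<open>measure \<mu> {x} > 0\<close> prob_space.prob_le_1[OF assms(1)] by (auto simp: p_def power_le_one)
  define B where "B m = {\<omega> \<in> space M. entry_matrix k E m \<omega> = mat k k (\<lambda>_. x)}" for m
  define S where
    "S n = {\<omega> \<in> space M. all_eigenvalues_real (prod_matrix k (\<lambda>m. entry_matrix k E m \<omega>) n)}" for n
  have X: "entry_matrix k E m \<omega> \<in> carrier_mat k k" for m \<omega> by (simp add: entry_matrix_def)
  have A: "prod_matrix k (\<lambda>m. entry_matrix k E m \<omega>) n \<in> carrier_mat k k" for n \<omega>
    by (rule prod_matrix_carrier) (rule X)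
  have "S n \<in> sets M" for n
    unfolding S_def using assms(6)
    by (intro sets_Collect_all_eigenvalues_real[OF A] borel_measurable_prod_matrix_entry[OF X])
      (auto simp: entry_matrix_def M.indep_vars_def)
  moreover have "(\<Union>m\<in>{1..n}. B m) \<subseteq> S n" for n
    unfolding B_def S_def by (auto intro: all_eigenvalues_real_prod_matrix_const_factor[OF X])
  moreover have "M.prob (\<Union>m\<in>{1..n}. B m) = 1 - (1 - p) ^ card {1..n}" for n
    unfolding B_def p_def
    by (rule M.prob_UN_indep_events[OF M.indep_events_entry_matrix_eq_const[OF assms(6)]])
      (auto intro: M.prob_entry_matrix_eq_const[OF assms(6,7) \<open>k \<ge> 1\<close>])
  ultimately have lower: "1 - (1 - p) ^ n \<le> M.prob (S n)" for n
    using M.finite_measure_mono by (metis card_atLeastAtMost diff_Suc_1)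
  have "(\<lambda>n. (1 - p) ^ n) \<longlonglongrightarrow> 0"
    by (rule LIMSEQ_power_zero) (use \<open>0 < p\<close> \<open>p \<le> 1\<close> in simp)
  then have lim: "(\<lambda>n. 1 - (1 - p) ^ n) \<longlonglongrightarrow> 1"
    using tendsto_diff[OF tendsto_const[of 1]] by fastforce
  have "(\<lambda>n. M.prob (S n)) \<longlonglongrightarrow> 1"
    by (rule tendsto_sandwich[OF _ _ lim tendsto_const]) (simp_all add: lower M.prob_le_1)
  then show ?thesis by (simp add: S_def)
qed

end
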